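(* Let $n\in\mathbb{N}$, $\mathcal{P}_n,\mathcal{E}_n\subseteq\mathcal{D}(\mathcal{H}^{\otimes n})$, and $r>0$. Then $\overline{\zeta}_{\mathrm{GPO},r}(\mathcal{P}_n,\mathcal{E}_n)=\alpha_{n,r}(\mathcal{P}_n\|\mathcal{E}_n)$.
   Context: $\mathcal{H}$ is finite-dimensional; $\mathcal{D}$ denotes density operators; $T(X,Y)=\tfrac12\|X-Y\|_1$. Battery: qubit with basis $\{|0\rangle,|1\rangle\}$, $\pi_M=(1-\tfrac1M)|0\rangle\langle0|+\tfrac1M|1\rangle\langle1|$, $\Pi_M=\{\pi_{M'}:M'\in[M,\infty)\}$. The optimal error of dirty-battery work extraction at rate $r$ is $\overline{\zeta}_{\mathrm{GPO},r}(\mathcal{P}_n,\mathcal{E}_n)=\inf\{\varepsilon\in[0,1]:\exists\text{ CPTP }\mathcal{F}_n\text{ with }T(\mathcal{F}_n(\rho),|1\rangle\langle1|)\le\varepsilon\ \forall\rho\in\mathcal{P}_n\text{ and }\mathcal{F}_n(\tau)\in\Pi_{2^{nr}}\ \forall\tau\in\mathcal{E}_n\}$. The optimal type-I error is $\alpha_{n,r}(\mathcal{P}_n\|\mathcal{E}_n)=\inf\{\sup_{\rho\in\mathcal{P}_n}\operatorname{tr}[(I-E)\rho]:0\le E\le I,\ \sup_{\tau\in\mathcal{E}_n}\operatorname{tr}[E\tau]\le2^{-nr}\}$. *)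

theory Defs
  imports Complex_Main "Jordan_Normal_Form.Matrix"
begin

definition mtrace :: "complex mat \<Rightarrow> complex" where
  "mtrace A = (\<Sum>i<dim_row A. A $$ (i,i))"

definition dagger :: "complex mat \<Rightarrow> complex mat" where
  "dagger A = mat (dim_col A) (dim_row A) (\<lambda>(i,j). cnj (A $$ (j,i)))"

definition hermitian :: "complex mat \<Rightarrow> bool" where
  "hermitian A \<longleftrightarrow> dim_row A = dim_col A \<and> dagger A = A"

definition psd :: "complex mat \<Rightarrow> bool" where
  "psd A \<longleftrightarrow> hermitian A \<and>
     (\<forall>v \<in> carrier_vec (dim_row A).
        Im (conjugate v \<bullet> (A *\<^sub>v v)) = 0 \<and> Re (conjugate v \<bullet> (A *\<^sub>v v)) \<ge> 0)"

definition density_ops :: "nat \<Rightarrow> complex mat set" where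
  "density_ops N = {\<rho> \<in> carrier_mat N N. psd \<rho> \<and> mtrace \<rho> = 1}"

definition psd_sqrt :: "complex mat \<Rightarrow> complex mat" where
  "psd_sqrt A = (THE B. B \<in> carrier_mat (dim_row A) (dim_row A) \<and> psd B \<and> B * B = A)"

definition trace_norm :: "complex mat \<Rightarrow> real" where
  "trace_norm A = Re (mtrace (psd_sqrt (dagger A * A)))"

definition trace_dist :: "complex mat \<Rightarrow> complex mat \<Rightarrow> real" where
  "trace_dist X Y = trace_norm (X - Y) / 2"

definition block :: "nat \<Rightarrow> complex mat \<Rightarrow> nat \<Rightarrow> nat \<Rightarrow> complex mat" where
  "block N X i j = mat N N (\<lambda>(a,b). X $$ (i*N + a, j*N + b))"

text \<open>The map \<open>id\<^sub>k \<otimes> F\<close>, where F maps N x N matrices to M x M matrices.\<close>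
definition id_tensor :: "nat \<Rightarrow> nat \<Rightarrow> nat \<Rightarrow> (complex mat \<Rightarrow> complex mat) \<Rightarrow> complex mat \<Rightarrow> complex mat" where
  "id_tensor k N M F X = mat (k*M) (k*M)
     (\<lambda>(p,q). F (block N X (p div M) (q div M)) $$ (p mod M, q mod M))"

definition cptp :: "nat \<Rightarrow> nat \<Rightarrow> (complex mat \<Rightarrow> complex mat) \<Rightarrow> bool" where
  "cptp N M F \<longleftrightarrow>
     (\<forall>X \<in> carrier_mat N N. F X \<in> carrier_mat M M) \<and>
     (\<forall>X \<in> carrier_mat N N. \<forall>Y \<in> carrier_mat N N. \<forall>c::complex.
         F (c \<cdot>\<^sub>m X + Y) = c \<cdot>\<^sub>m F X + F Y) \<and>
     (\<forall>X \<in> carrier_mat N N. mtrace (F X) = mtrace X) \<and>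
     (\<forall>k. \<forall>X \<in> carrier_mat (k*N) (k*N). psd X \<longrightarrow> psd (id_tensor k N M F X))"

definition ket1bra :: "complex mat" where
  "ket1bra = mat 2 2 (\<lambda>(i,j). if i = 1 \<and> j = 1 then 1 else 0)"

definition battery_state :: "real \<Rightarrow> complex mat" where
  "battery_state M = mat 2 2 (\<lambda>(i,j).
      if i = 0 \<and> j = 0 then complex_of_real (1 - 1/M)
      else if i = 1 \<and> j = 1 then complex_of_real (1/M) else 0)"

definition battery_set :: "real \<Rightarrow> complex mat set" where
  "battery_set M = {battery_state M' | M'. M' \<ge> M}"

definition rsup :: "real set \<Rightarrow> real" where
  "rsup S = (if S = {} then 0 else Sup S)"

definition zeta_GPO :: "nat \<Rightarrow> nat \<Rightarrow> real \<Rightarrow> complex mat set \<Rightarrow> complex mat set \<Rightarrow> real" where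
  "zeta_GPO N n r P E = Inf {\<epsilon> \<in> {0..1}. \<exists>F. cptp N 2 F \<and>
      (\<forall>\<rho> \<in> P. trace_dist (F \<rho>) ket1bra \<le> \<epsilon>) \<and>
      (\<forall>\<tau> \<in> E. F \<tau> \<in> battery_set (2 powr (real n * r)))}"

definition alpha_err :: "nat \<Rightarrow> nat \<Rightarrow> real \<Rightarrow> complex mat set \<Rightarrow> complex mat set \<Rightarrow> real" where
  "alpha_err N n r P E = Inf {rsup ((\<lambda>\<rho>. Re (mtrace ((1\<^sub>m N - T) * \<rho>))) ` P) | T.
      T \<in> carrier_mat N N \<and> psd T \<and> psd (1\<^sub>m N - T) \<and>
      rsup ((\<lambda>\<tau>. Re (mtrace (T * \<tau>))) ` E) \<le> 2 powr (- (real n * r))}"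

end

theory Submission
  imports Defs "HOL-Library.Complex_Order"
begin

(* A channel F into the battery qubit yields the test T = F^dagger(|1><1|), with tr(T X) the
   |1><1| population of F X: on E this is 1/M' <= 1/M for the battery state F tau, and on P
   its complement is the |0><0| population of F rho, a lower bound for the trace distance of
   F rho to |1><1|.  Conversely a test T gives the measure-and-prepare channel
   X |-> tr((I-T)X) |0><0| + tr(TX) |1><1|, whose outputs are battery states at trace distance
   exactly tr((I-T) rho) from |1><1|, provided all outcome probabilities are positive; mixing
   T with a small multiple of I ensures this at an arbitrarily small cost in type-I error.
   So each feasible error of one problem is approximated from above by a feasible error of
   the other, and the two infima agree. *)

lemma sum_lessThan_mult_blocks:
  fixes f :: "nat \<Rightarrow> 'a::comm_monoid_add"
  shows "(\<Sum>p<k*N. f p) = (\<Sum>i<k. \<Sum>c<N. f (i*N + c))"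
proof -
  have "(\<Sum>p<k*N. f p) = (\<Sum>i<k. sum f {i*N..<i*N + N})"
    using sum.nat_group[of f N k] by simp
  also have "\<dots> = (\<Sum>i<k. \<Sum>c<N. f (i*N + c))"
    using sum.atLeastLessThan_shift_0[of f "i*N" "i*N + N" for i]
    by (simp add: atLeast0LessThan comp_def)
  finally show ?thesis .
qed

lemma complex_nonneg_iff: "0 \<le> z \<longleftrightarrow> Im z = 0 \<and> 0 \<le> Re z"
  by (auto simp: less_eq_complex_def)

lemma complex_of_real_nonneg_iff [simp]: "0 \<le> complex_of_real x \<longleftrightarrow> 0 \<le> x"
  by (simp add: less_eq_complex_def)

definition qform :: "nat \<Rightarrow> complex mat \<Rightarrow> (nat \<Rightarrow> complex) \<Rightarrow> complex" where
  "qform n A v = (\<Sum>i<n. \<Sum>j<n. cnj (v i) * A $$ (i,j) * v j)"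

definition tr_prod :: "nat \<Rightarrow> complex mat \<Rightarrow> complex mat \<Rightarrow> complex" where
  "tr_prod n A X = (\<Sum>i<n. \<Sum>j<n. A $$ (i,j) * X $$ (j,i))"

lemma mtrace_mult_eq_tr_prod:
  assumes "A \<in> carrier_mat n n" "X \<in> carrier_mat n n"
  shows "mtrace (A * X) = tr_prod n A X"
  using assms by (simp add: mtrace_def tr_prod_def scalar_prod_def atLeast0LessThan)

lemma qform_vec:
  assumes "A \<in> carrier_mat n n"
  shows "conjugate (vec n v) \<bullet> (A *\<^sub>v vec n v) = qform n A v"
proof -
  have "row A i \<bullet> vec n v = (\<Sum>j<n. A $$ (i,j) * v j)" if "i < n" for i
    using assms that by (simp add: scalar_prod_def atLeast0LessThan)
  then show ?thesis
    using assms by (simp add: qform_def scalar_prod_def atLeast0LessThan sum_distrib_left mult.assoc)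
qed

lemma qform_add_delta:
  assumes "k < n"
  shows "qform n A (\<lambda>i. v i + (if i = k then t else 0)) =
    qform n A v + cnj t * (\<Sum>j<n. A $$ (k,j) * v j) + t * (\<Sum>i<n. cnj (v i) * A $$ (i,k))
     + cnj t * A $$ (k,k) * t"
proof -
  have expand: "cnj (v i + (if i = k then t else 0)) * A $$ (i,j) * (v j + (if j = k then t else 0))
     = cnj (v i) * A $$ (i,j) * v j + (if i = k then cnj t * A $$ (k,j) * v j else 0)
       + (if j = k then t * (cnj (v i) * A $$ (i,k)) else 0)
       + (if i = k \<and> j = k then cnj t * A $$ (k,k) * t else 0)" for i j
    by (auto simp: algebra_simps)
  have "(\<Sum>i<n. \<Sum>j<n. if i = k then cnj t * A $$ (k,j) * v j else 0)
      = (\<Sum>i<n. if i = k then (\<Sum>j<n. cnj t * A $$ (k,j) * v j) else 0)"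
    by (rule sum.cong) auto
  then have "(\<Sum>i<n. \<Sum>j<n. if i = k then cnj t * A $$ (k,j) * v j else 0)
      = cnj t * (\<Sum>j<n. A $$ (k,j) * v j)"
    using assms by (simp add: sum_distrib_left mult.assoc)
  moreover have "(\<Sum>i<n. \<Sum>j<n. if j = k then t * (cnj (v i) * A $$ (i,k)) else 0)
      = t * (\<Sum>i<n. cnj (v i) * A $$ (i,k))"
    using assms by (simp add: sum_distrib_left)
  moreover have "(\<Sum>i<n. \<Sum>j<n. if i = k \<and> j = k then cnj t * A $$ (k,k) * t else 0)
      = (\<Sum>i<n. if i = k then cnj t * A $$ (k,k) * t else 0)"
    using assms by (intro sum.cong refl) (auto simp: sum.delta)
  moreover have "(\<Sum>i<n. if i = k then cnj t * A $$ (k,k) * t else 0) = cnj t * A $$ (k,k) * t"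
    using assms by simp
  ultimately show ?thesis
    unfolding qform_def expand sum.distrib by simp
qed

lemma qform_unit:
  assumes "k < n"
  shows "qform n A (\<lambda>i. if i = k then t else 0) = cnj t * A $$ (k,k) * t"
  using qform_add_delta[OF assms, of A "\<lambda>i. 0" t] by (simp add: qform_def)

lemma qform_two:
  assumes "a < n" "b < n" "a \<noteq> b"
  shows "qform n A (\<lambda>i. (if i = a then x else 0) + (if i = b then y else 0)) =
     cnj x * A $$ (a,a) * x + cnj y * A $$ (b,a) * x + y * cnj x * A $$ (a,b) + cnj y * A $$ (b,b) * y"
proof -
  have "(\<Sum>j<n. A $$ (b,j) * (if j = a then x else 0)) = (\<Sum>j<n. if j = a then A $$ (b,a) * x else 0)"
    "(\<Sum>i<n. cnj (if i = a then x else 0) * A $$ (i,b)) = (\<Sum>i<n. if i = a then cnj x * A $$ (a,b) else 0)"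
    by (rule sum.cong; auto)+
  then have "(\<Sum>j<n. A $$ (b,j) * (if j = a then x else 0)) = A $$ (b,a) * x"
    "(\<Sum>i<n. cnj (if i = a then x else 0) * A $$ (i,b)) = cnj x * A $$ (a,b)"
    using assms(1) by simp_all
  then show ?thesis
    using qform_add_delta[OF assms(2), of A "\<lambda>i. if i = a then x else 0" y] qform_unit[OF assms(1)]
    by (simp add: algebra_simps)
qed

lemma hermitian_if_qform_real:
  assumes real: "\<And>v. Im (qform n A v) = 0" and ij: "i < n" "j < n"
  shows "A $$ (j,i) = cnj (A $$ (i,j))"
proof -
  have diag: "Im (A $$ (k,k)) = 0" if "k < n" for k
    using real[of "\<lambda>l. if l = k then 1 else 0"] qform_unit[OF that, of A 1] by simp
  show ?thesis
  proof (cases "i = j")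
    case True
    then show ?thesis using diag[OF ij(1)] by (simp add: complex_eq_iff)
  next
    case False
    have "Im (A $$ (j,i)) + Im (A $$ (i,j)) = 0"
      using real[of "\<lambda>l. (if l = i then 1 else 0) + (if l = j then 1 else 0)"]
        qform_two[OF ij False, of A 1 1] diag ij by simp
    moreover have "Re (A $$ (i,j)) - Re (A $$ (j,i)) = 0"
      using real[of "\<lambda>l. (if l = i then 1 else 0) + (if l = j then \<i> else 0)"]
        qform_two[OF ij False, of A 1 \<i>] diag ij by simp
    ultimately show ?thesis by (simp add: complex_eq_iff)
  qed
qed

lemma psd_iff_qform_nonneg:
  assumes A: "A \<in> carrier_mat n n"
  shows "psd A \<longleftrightarrow> (\<forall>v. 0 \<le> qform n A v)"
proof
  assume "psd A"
  then show "\<forall>v. 0 \<le> qform n A v"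
    using A qform_vec[OF A] unfolding psd_def complex_nonneg_iff
    by (metis carrier_matD(1) vec_carrier)
next
  assume nonneg: "\<forall>v. 0 \<le> qform n A v"
  have "dagger A = A"
  proof (rule eq_matI)
    fix i j assume "i < dim_row A" "j < dim_col A"
    then show "dagger A $$ (i,j) = A $$ (i,j)"
      using A hermitian_if_qform_real[of n A j i] nonneg
      by (simp add: dagger_def complex_nonneg_iff)
  qed (use A in \<open>auto simp: dagger_def\<close>)
  moreover have "0 \<le> conjugate v \<bullet> (A *\<^sub>v v)" if "v \<in> carrier_vec n" for v
  proof -
    have "v = vec n (\<lambda>i. v $ i)" using that by auto
    then show ?thesis using nonneg qform_vec[OF A] by metis
  qed
  ultimately show "psd A"
    using A by (auto simp: psd_def hermitian_def complex_nonneg_iff)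
qed

lemma psd_entry_cnj:
  assumes "A \<in> carrier_mat n n" "psd A" "i < n" "j < n"
  shows "A $$ (j,i) = cnj (A $$ (i,j))"
  using assms hermitian_if_qform_real[of n A i j] psd_iff_qform_nonneg[of A n]
  by (simp add: complex_nonneg_iff)

lemma psd_diag_nonneg:
  assumes "A \<in> carrier_mat n n" "psd A" "k < n"
  shows "0 \<le> A $$ (k,k)"
proof -
  have "0 \<le> qform n A (\<lambda>i. if i = k then 1 else 0)"
    using assms psd_iff_qform_nonneg[of A n] by blast
  then show ?thesis using qform_unit[OF assms(3), of A 1] by simp
qed

lemma qform_add:
  "A \<in> carrier_mat n n \<Longrightarrow> B \<in> carrier_mat n n \<Longrightarrow> qform n (A + B) v = qform n A v + qform n B v"
  unfolding qform_def by (simp add: sum.distrib[symmetric] algebra_simps)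

lemma qform_smult: "A \<in> carrier_mat n n \<Longrightarrow> qform n (c \<cdot>\<^sub>m A) v = c * qform n A v"
  unfolding qform_def by (simp add: sum_distrib_left algebra_simps)

lemma qform_one: "qform n (1\<^sub>m n) v = (\<Sum>i<n. cnj (v i) * v i)"
proof -
  have "qform n (1\<^sub>m n) v = (\<Sum>i<n. \<Sum>j<n. if i = j then cnj (v i) * v i else 0)"
    unfolding qform_def by (intro sum.cong refl) auto
  then show ?thesis by simp
qed

lemma cnj_mult_self_nonneg: "0 \<le> cnj z * z"
  by (simp add: complex_nonneg_iff)

lemma psd_add:
  assumes "A \<in> carrier_mat n n" "B \<in> carrier_mat n n" "psd A" "psd B"
  shows "psd (A + B)"
  using assms psd_iff_qform_nonneg[of _ n] by (simp add: qform_add)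

lemma psd_smult:
  assumes "A \<in> carrier_mat n n" "psd A" "0 \<le> c"
  shows "psd (c \<cdot>\<^sub>m A)"
  using assms psd_iff_qform_nonneg[of _ n] by (simp add: qform_smult)

lemma psd_one: "psd (1\<^sub>m n)"
  using psd_iff_qform_nonneg[of "1\<^sub>m n" n]
  by (simp add: qform_one sum_nonneg cnj_mult_self_nonneg)

lemma psd_zero: "psd (0\<^sub>m n n)"
  using psd_iff_qform_nonneg[of "0\<^sub>m n n" n] by (simp add: qform_def)

section \<open>Gram decomposition of positive semidefinite matrices\<close>

lemma qform_rank_one_update:
  "qform n (mat n n (\<lambda>(i,j). A $$ (i,j) - A $$ (i,k) * A $$ (k,j) / a)) v =
    qform n A v - (\<Sum>i<n. cnj (v i) * A $$ (i,k)) * (\<Sum>j<n. A $$ (k,j) * v j) / a"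
proof -
  have "qform n (mat n n (\<lambda>(i,j). A $$ (i,j) - A $$ (i,k) * A $$ (k,j) / a)) v =
     (\<Sum>i<n. \<Sum>j<n. cnj (v i) * A $$ (i,j) * v j - (cnj (v i) * A $$ (i,k)) * (A $$ (k,j) * v j) / a)"
    unfolding qform_def by (intro sum.cong refl) (auto simp: algebra_simps)
  also have "\<dots> = qform n A v - (\<Sum>i<n. \<Sum>j<n. (cnj (v i) * A $$ (i,k)) * (A $$ (k,j) * v j) / a)"
    unfolding qform_def by (simp add: sum_subtractf)
  also have "(\<Sum>i<n. \<Sum>j<n. (cnj (v i) * A $$ (i,k)) * (A $$ (k,j) * v j) / a) =
     (\<Sum>i<n. cnj (v i) * A $$ (i,k)) * (\<Sum>j<n. A $$ (k,j) * v j) / a"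
    by (simp add: sum_product sum_divide_distrib)
  finally show ?thesis .
qed

lemma qform_nonneg_diag_real:
  assumes "\<And>v. 0 \<le> qform n A v" "k < n"
  shows "A $$ (k,k) = complex_of_real (Re (A $$ (k,k)))" "0 \<le> Re (A $$ (k,k))"
  using assms(1)[of "\<lambda>i. if i = k then 1 else 0"] qform_unit[OF assms(2), of A 1]
  by (simp_all add: complex_nonneg_iff complex_eq_iff)

lemma qform_nonneg_zero_pivot:
  assumes nonneg: "\<And>v. 0 \<le> qform n A v" and kj: "k < n" "j < n" and pivot: "A $$ (k,k) = 0"
  shows "A $$ (k,j) = 0"
proof (rule ccontr)
  define b where "b = A $$ (k,j)"
  assume "A $$ (k,j) \<noteq> 0"
  then have b0: "cmod b > 0" and jk: "j \<noteq> k" using pivot by (auto simp: b_def)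
  have herm: "A $$ (j,k) = cnj b"
    using hermitian_if_qform_real[OF _ kj] nonneg by (simp add: complex_nonneg_iff b_def)
  define s where "s = (Re (A $$ (j,j)) + 1) / (2 * (cmod b)^2)"
  define t where "t = - complex_of_real s * b"
  have "cnj t * b + t * cnj b = - 2 * complex_of_real s * (cnj b * b)"
    by (simp add: t_def algebra_simps)
  moreover have "cnj b * b = complex_of_real ((cmod b)^2)"
    by (metis complex_norm_square mult.commute)
  ultimately have "qform n A (\<lambda>i. (if i = j then 1 else 0) + (if i = k then t else 0)) =
      A $$ (j,j) - 2 * complex_of_real (s * (cmod b)^2)"
    using qform_two[OF kj(2,1) jk, of A 1 t] pivot herm by (simp add: b_def)
  then have "Re (qform n A (\<lambda>i. (if i = j then 1 else 0) + (if i = k then t else 0))) =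
      Re (A $$ (j,j)) - 2 * (s * (cmod b)^2)"
    by simp
  also have "\<dots> = -1"
    using b0 by (simp add: s_def field_simps)
  finally have "Re (qform n A (\<lambda>i. (if i = j then 1 else 0) + (if i = k then t else 0))) = -1" .
  then show False
    using nonneg[of "\<lambda>i. (if i = j then 1 else 0) + (if i = k then t else 0)"]
    by (simp add: complex_nonneg_iff)
qed

lemma qform_nonneg_schur_complement:
  assumes nonneg: "\<And>v. 0 \<le> qform n A v" and k: "k < n" and pivot: "A $$ (k,k) \<noteq> 0"
  shows "0 \<le> qform n (mat n n (\<lambda>(i,j). A $$ (i,j) - A $$ (i,k) * A $$ (k,j) / A $$ (k,k))) v"
proof -
  define a where "a = A $$ (k,k)"
  have cnj_a: "cnj a = a"
    using qform_nonneg_diag_real[OF nonneg k] by (metis a_def complex_cnj_complex_of_real)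
  define \<beta> where "\<beta> = (\<Sum>j<n. A $$ (k,j) * v j)"
  have \<gamma>: "(\<Sum>i<n. cnj (v i) * A $$ (i,k)) = cnj \<beta>"
    using hermitian_if_qform_real[OF _ k] nonneg
    by (simp add: \<beta>_def cnj_sum complex_nonneg_iff mult.commute)
  define t where "t = - \<beta> / a"
  have "qform n A (\<lambda>i. v i + (if i = k then t else 0)) = qform n A v + cnj t * \<beta> + t * cnj \<beta> + cnj t * a * t"
    using qform_add_delta[OF k, of A v t] \<gamma> by (simp add: \<beta>_def a_def)
  also have "\<dots> = qform n A v - cnj \<beta> * \<beta> / a"
    using pivot cnj_a by (simp add: t_def a_def field_simps power2_eq_square)
  also have "\<dots> = qform n (mat n n (\<lambda>(i,j). A $$ (i,j) - A $$ (i,k) * A $$ (k,j) / a)) v"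
    unfolding qform_rank_one_update \<gamma> \<beta>_def ..
  finally show ?thesis using nonneg unfolding a_def by metis
qed

lemma qform_nonneg_pivot_split:
  assumes nonneg: "\<And>v. 0 \<le> qform n A v" and k: "k < n"
  shows "\<exists>u. \<forall>i<n. \<forall>j<n.
    A $$ (i,j) = (A $$ (i,j) - A $$ (i,k) * A $$ (k,j) / A $$ (k,k)) + u i * cnj (u j)"
proof -
  define r where "r = complex_of_real (sqrt (Re (A $$ (k,k))))"
  have r: "r * r = A $$ (k,k)" "cnj r = r"
    using qform_nonneg_diag_real[OF nonneg k] by (simp_all add: r_def flip: of_real_mult)
  have "A $$ (i,k) / r * cnj (A $$ (j,k) / r) = A $$ (i,k) * A $$ (k,j) / A $$ (k,k)" if "i < n" "j < n" for i j
    using hermitian_if_qform_real[OF _ k that(2)] nonneg r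
    by (simp add: complex_nonneg_iff times_divide_times_eq flip: r(1))
  then show ?thesis
    by (intro exI[of _ "\<lambda>i. A $$ (i,k) / r"]) simp
qed

text \<open>Symmetric Gaussian elimination: a zero pivot \<open>A\<^sub>k\<^sub>k\<close> forces a zero row and column;
  otherwise \<open>A\<close> is \<open>u u\<^sup>\<dagger>\<close> plus the Schur complement, which is again positive
  semidefinite and vanishes on one more row and column.\<close>
lemma gram_decomposition_aux:
  assumes "\<And>v. 0 \<le> qform n A v"
    and "\<And>i j. i < n \<Longrightarrow> j < n \<Longrightarrow> i < k \<or> j < k \<Longrightarrow> A $$ (i,j) = 0"
  shows "\<exists>(m::nat) U. \<forall>i<n. \<forall>j<n. A $$ (i,j) = (\<Sum>l<m. U l i * cnj (U l j))"
  using assms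
proof (induction "n - k" arbitrary: A k)
  case 0
  then show ?case by (intro exI[of _ 0]) auto
next
  case (Suc m')
  note nonneg = Suc.prems(1) and zero = Suc.prems(2)
  have k: "k < n" and m': "m' = n - Suc k" using Suc.hyps by auto
  have herm: "A $$ (j,i) = cnj (A $$ (i,j))" if "i < n" "j < n" for i j
    using hermitian_if_qform_real[OF _ that] nonneg by (simp add: complex_nonneg_iff)
  define a where "a = A $$ (k,k)"
  show ?case
  proof (cases "a = 0")
    case True
    have "A $$ (i,j) = 0" if "i < n" "j < n" "i < Suc k \<or> j < Suc k" for i j
      using that zero qform_nonneg_zero_pivot[OF nonneg k] herm True
      by (metis a_def complex_cnj_zero less_Suc_eq)
    then show ?thesis by (rule Suc.hyps(1)[OF m' nonneg])
  next
    case False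
    define S where "S = mat n n (\<lambda>(i,j). A $$ (i,j) - A $$ (i,k) * A $$ (k,j) / a)"
    have S: "S $$ (i,j) = A $$ (i,j) - A $$ (i,k) * A $$ (k,j) / a" if "i < n" "j < n" for i j
      using that by (simp add: S_def)
    have S_nonneg: "0 \<le> qform n S v" for v
      using qform_nonneg_schur_complement[OF nonneg k False[unfolded a_def]] by (simp add: S_def a_def)
    have S_zero: "S $$ (i,j) = 0" if ij: "i < n" "j < n" and ij_k: "i < Suc k \<or> j < Suc k" for i j
    proof -
      consider "i < k" | "j < k" | "i = k" | "j = k" using ij_k by linarith
      then show ?thesis
        by cases (use ij k False zero[of i j] zero[of i k] zero[of k j] in \<open>simp_all add: S a_def\<close>)
    qed
    obtain m :: nat and U where U: "\<forall>i<n. \<forall>j<n. S $$ (i,j) = (\<Sum>l<m. U l i * cnj (U l j))"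
      using Suc.hyps(1)[OF m' S_nonneg S_zero] by blast
    obtain u where u: "\<forall>i<n. \<forall>j<n. A $$ (i,j) = S $$ (i,j) + u i * cnj (u j)"
      using qform_nonneg_pivot_split[OF nonneg k] by (auto simp: S a_def)
    have "(\<Sum>l<Suc m. (U(m := u)) l i * cnj ((U(m := u)) l j))
        = (\<Sum>l<m. U l i * cnj (U l j)) + u i * cnj (u j)" for i j
      by (auto simp: lessThan_Suc intro!: sum.cong)
    then have "\<forall>i<n. \<forall>j<n. A $$ (i,j) = (\<Sum>l<Suc m. (U(m := u)) l i * cnj ((U(m := u)) l j))"
      using U u by simp
    then show ?thesis by blast
  qed
qed

lemma psd_gram_decomposition:
  assumes "A \<in> carrier_mat n n" "psd A"
  shows "\<exists>(m::nat) U. \<forall>i<n. \<forall>j<n. A $$ (i,j) = (\<Sum>l<m. U l i * cnj (U l j))"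
  using gram_decomposition_aux[of n A 0] assms psd_iff_qform_nonneg[of A n] by auto

lemma tr_prod_psd_nonneg:
  assumes "A \<in> carrier_mat n n" "psd A" "Z \<in> carrier_mat n n" "psd Z"
  shows "0 \<le> tr_prod n A Z"
proof -
  obtain m :: nat and U where U: "\<forall>i<n. \<forall>j<n. A $$ (i,j) = (\<Sum>l<m. U l i * cnj (U l j))"
    using psd_gram_decomposition[OF assms(1,2)] by blast
  have "tr_prod n A Z = (\<Sum>i<n. \<Sum>j<n. \<Sum>l<m. U l i * cnj (U l j) * Z $$ (j,i))"
    unfolding tr_prod_def by (simp add: U sum_distrib_right)
  also have "\<dots> = (\<Sum>j<n. \<Sum>i<n. \<Sum>l<m. U l i * cnj (U l j) * Z $$ (j,i))"
    by (rule sum.swap)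
  also have "\<dots> = (\<Sum>j<n. \<Sum>l<m. \<Sum>i<n. U l i * cnj (U l j) * Z $$ (j,i))"
    by (rule sum.cong[OF refl], rule sum.swap)
  also have "\<dots> = (\<Sum>l<m. \<Sum>j<n. \<Sum>i<n. cnj (U l j) * Z $$ (j,i) * U l i)"
    by (subst sum.swap) (simp add: ac_simps)
  also have "\<dots> = (\<Sum>l<m. qform n Z (U l))"
    unfolding qform_def ..
  finally show ?thesis
    using assms(4) psd_iff_qform_nonneg[OF assms(3)] by (simp add: sum_nonneg)
qed

lemma tr_prod_linear_left:
  assumes "A \<in> carrier_mat n n" "B \<in> carrier_mat n n"
  shows "tr_prod n (a \<cdot>\<^sub>m A + b \<cdot>\<^sub>m B) X = a * tr_prod n A X + b * tr_prod n B X"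
  using assms unfolding tr_prod_def by (simp add: sum.distrib sum_distrib_left algebra_simps)

lemma tr_prod_smult_left:
  assumes "A \<in> carrier_mat n n"
  shows "tr_prod n (c \<cdot>\<^sub>m A) X = c * tr_prod n A X"
  using assms unfolding tr_prod_def by (simp add: sum_distrib_left algebra_simps)

lemma tr_prod_linear_right:
  assumes "X \<in> carrier_mat n n" "Y \<in> carrier_mat n n"
  shows "tr_prod n A (c \<cdot>\<^sub>m X + Y) = c * tr_prod n A X + tr_prod n A Y"
  using assms unfolding tr_prod_def by (simp add: sum.distrib sum_distrib_left algebra_simps)

lemma tr_prod_diff_left:
  assumes "A \<in> carrier_mat n n" "B \<in> carrier_mat n n"
  shows "tr_prod n (A - B) X = tr_prod n A X - tr_prod n B X"
  using assms unfolding tr_prod_def by (simp add: sum_subtractf[symmetric] algebra_simps)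

lemma tr_prod_one_left:
  assumes "X \<in> carrier_mat n n"
  shows "tr_prod n (1\<^sub>m n) X = mtrace X"
proof -
  have "tr_prod n (1\<^sub>m n) X = (\<Sum>i<n. \<Sum>j<n. if i = j then X $$ (i,i) else 0)"
    unfolding tr_prod_def by (intro sum.cong refl) auto
  then show ?thesis using assms by (simp add: mtrace_def)
qed

lemma density_opsD:
  assumes "\<rho> \<in> density_ops N"
  shows "\<rho> \<in> carrier_mat N N" "psd \<rho>" "mtrace \<rho> = 1"
  using assms by (simp_all add: density_ops_def)

definition is_test :: "nat \<Rightarrow> complex mat \<Rightarrow> bool" where
  "is_test N T \<longleftrightarrow> T \<in> carrier_mat N N \<and> psd T \<and> psd (1\<^sub>m N - T)"

lemma is_test_zero: "is_test N (0\<^sub>m N N)"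
proof -
  have "1\<^sub>m N - 0\<^sub>m N N = (1\<^sub>m N :: complex mat)" by (rule eq_matI) auto
  then show ?thesis by (simp add: is_test_def psd_zero psd_one)
qed

lemma is_test_scalar:
  assumes "0 \<le> c" "c \<le> 1"
  shows "is_test N (complex_of_real c \<cdot>\<^sub>m 1\<^sub>m N)"
proof -
  have "1\<^sub>m N - complex_of_real c \<cdot>\<^sub>m 1\<^sub>m N = complex_of_real (1 - c) \<cdot>\<^sub>m (1\<^sub>m N :: complex mat)"
    by (rule eq_matI) auto
  moreover have "psd (complex_of_real x \<cdot>\<^sub>m 1\<^sub>m N)" if "0 \<le> x" for x
    using that by (intro psd_smult[OF one_carrier_mat psd_one]) simp
  ultimately show ?thesis
    using assms by (simp add: is_test_def del: of_real_diff)
qed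

lemma is_test_convex:
  assumes T: "is_test N T" and S: "is_test N S" and t: "0 \<le> t" "t \<le> 1"
  shows "is_test N (complex_of_real t \<cdot>\<^sub>m T + complex_of_real (1 - t) \<cdot>\<^sub>m S)"
proof -
  have C: "T \<in> carrier_mat N N" "S \<in> carrier_mat N N"
    "1\<^sub>m N - T \<in> carrier_mat N N" "1\<^sub>m N - S \<in> carrier_mat N N"
    using T S by (auto simp: is_test_def)
  have "1\<^sub>m N - (complex_of_real t \<cdot>\<^sub>m T + complex_of_real (1 - t) \<cdot>\<^sub>m S) =
      complex_of_real t \<cdot>\<^sub>m (1\<^sub>m N - T) + complex_of_real (1 - t) \<cdot>\<^sub>m (1\<^sub>m N - S)"
    by (rule eq_matI) (use C in \<open>auto simp: algebra_simps\<close>)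
  moreover have "psd (complex_of_real t \<cdot>\<^sub>m X + complex_of_real (1 - t) \<cdot>\<^sub>m Y)"
    if "X \<in> carrier_mat N N" "Y \<in> carrier_mat N N" "psd X" "psd Y" for X Y
    using that t by (intro psd_add[of _ N] psd_smult[of _ N]) (auto simp del: of_real_diff)
  ultimately show ?thesis
    using T S C by (simp add: is_test_def del: of_real_diff)
qed

lemma test_prob_bounds:
  assumes T: "is_test N T" and \<rho>: "\<rho> \<in> density_ops N"
  shows "tr_prod N (1\<^sub>m N - T) \<rho> = 1 - tr_prod N T \<rho>" "0 \<le> tr_prod N T \<rho>" "tr_prod N T \<rho> \<le> 1"
proof -
  have C: "T \<in> carrier_mat N N" "1\<^sub>m N - T \<in> carrier_mat N N" using T by (auto simp: is_test_def)
  show compl: "tr_prod N (1\<^sub>m N - T) \<rho> = 1 - tr_prod N T \<rho>"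
    using C density_opsD[OF \<rho>] by (simp add: tr_prod_diff_left tr_prod_one_left)
  show "0 \<le> tr_prod N T \<rho>"
    using T density_opsD[OF \<rho>] by (intro tr_prod_psd_nonneg) (auto simp: is_test_def)
  have "0 \<le> tr_prod N (1\<^sub>m N - T) \<rho>"
    using T density_opsD[OF \<rho>] C by (intro tr_prod_psd_nonneg) (auto simp: is_test_def)
  then show "tr_prod N T \<rho> \<le> 1" unfolding compl by simp
qed

lemma rsup_le: "(\<And>x. x \<in> S \<Longrightarrow> x \<le> b) \<Longrightarrow> 0 \<le> b \<Longrightarrow> rsup S \<le> b"
  unfolding rsup_def by (auto intro: cSup_least)

lemma le_rsup: "x \<in> S \<Longrightarrow> bdd_above S \<Longrightarrow> x \<le> rsup S"
  unfolding rsup_def by (auto intro: cSup_upper)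

definition type1_err :: "nat \<Rightarrow> complex mat \<Rightarrow> complex mat set \<Rightarrow> real" where
  "type1_err N T P = rsup ((\<lambda>\<rho>. Re (mtrace ((1\<^sub>m N - T) * \<rho>))) ` P)"

definition type2_err :: "complex mat \<Rightarrow> complex mat set \<Rightarrow> real" where
  "type2_err T E = rsup ((\<lambda>\<tau>. Re (mtrace (T * \<tau>))) ` E)"

lemma type1_err_ge:
  assumes T: "is_test N T" and P: "P \<subseteq> density_ops N" and \<rho>: "\<rho> \<in> P"
  shows "1 - Re (tr_prod N T \<rho>) \<le> type1_err N T P"
proof -
  have val: "Re (mtrace ((1\<^sub>m N - T) * \<sigma>)) = 1 - Re (tr_prod N T \<sigma>)" if "\<sigma> \<in> P" for \<sigma>
    using that P T test_prob_bounds(1)[OF T] density_opsD(1)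
    by (subst mtrace_mult_eq_tr_prod) (auto simp: is_test_def)
  have "1 - Re (tr_prod N T \<sigma>) \<le> 1" if "\<sigma> \<in> P" for \<sigma>
    using that P test_prob_bounds(2)[OF T] by (force simp: complex_nonneg_iff)
  then have "bdd_above ((\<lambda>\<rho>. Re (mtrace ((1\<^sub>m N - T) * \<rho>))) ` P)"
    using val by (intro bdd_aboveI[of _ 1]) auto
  then show ?thesis
    unfolding type1_err_def using le_rsup \<rho> val by (metis image_eqI)
qed

lemma type1_err_nonneg:
  assumes "is_test N T" "P \<subseteq> density_ops N"
  shows "0 \<le> type1_err N T P"
proof (cases "P = {}")
  case True
  then show ?thesis by (simp add: type1_err_def rsup_def)
next
  case False
  then obtain \<rho> where \<rho>: "\<rho> \<in> P" by blast
  have "tr_prod N T \<rho> \<le> 1" using \<rho> assms test_prob_bounds(3)[OF assms(1)] by blast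
  then show ?thesis
    using type1_err_ge[OF assms \<rho>] by (simp add: less_eq_complex_def)
qed

lemma type2_err_ge:
  assumes T: "is_test N T" and E: "E \<subseteq> density_ops N" and \<tau>: "\<tau> \<in> E"
  shows "Re (tr_prod N T \<tau>) \<le> type2_err T E"
proof -
  have val: "Re (mtrace (T * \<sigma>)) = Re (tr_prod N T \<sigma>)" if "\<sigma> \<in> E" for \<sigma>
    using that E T density_opsD(1) by (subst mtrace_mult_eq_tr_prod) (auto simp: is_test_def)
  have "Re (tr_prod N T \<sigma>) \<le> 1" if "\<sigma> \<in> E" for \<sigma>
    using that E test_prob_bounds(3)[OF T] by (force simp: less_eq_complex_def)
  then have "bdd_above ((\<lambda>\<tau>. Re (mtrace (T * \<tau>))) ` E)"
    using val by (intro bdd_aboveI[of _ 1]) auto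
  then show ?thesis
    unfolding type2_err_def using le_rsup \<tau> val by (metis image_eqI)
qed

lemma type2_err_zero:
  assumes "E \<subseteq> carrier_mat N N"
  shows "type2_err (0\<^sub>m N N) E = 0"
proof -
  have "mtrace (0\<^sub>m N N * \<tau>) = 0" if "\<tau> \<in> E" for \<tau>
    using that assms by (subst left_mult_zero_mat[of _ N N]) (auto simp: mtrace_def)
  then have "(\<lambda>\<tau>. Re (mtrace (0\<^sub>m N N * \<tau>))) ` E \<subseteq> {0}"
    by auto
  then show ?thesis
    unfolding type2_err_def rsup_def by (metis cSup_singleton subset_singletonD)
qed

section \<open>The test induced by a channel\<close>

definition mat_unit :: "nat \<Rightarrow> nat \<Rightarrow> nat \<Rightarrow> complex mat" where
  "mat_unit N a b = mat N N (\<lambda>(x,y). if x = a \<and> y = b then 1 else 0)"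

lemma linear_functional_expansion:
  fixes \<phi> :: "complex mat \<Rightarrow> complex"
  assumes lin: "\<And>X Y c. X \<in> carrier_mat N N \<Longrightarrow> Y \<in> carrier_mat N N \<Longrightarrow>
      \<phi> (c \<cdot>\<^sub>m X + Y) = c * \<phi> X + \<phi> Y"
    and X: "X \<in> carrier_mat N N"
  shows "\<phi> X = (\<Sum>a<N. \<Sum>b<N. X $$ (a,b) * \<phi> (mat_unit N a b))"
proof -
  have "\<phi> (1 \<cdot>\<^sub>m 0\<^sub>m N N + 0\<^sub>m N N) = 1 * \<phi> (0\<^sub>m N N) + \<phi> (0\<^sub>m N N)"
    by (rule lin) auto
  moreover have "(1::complex) \<cdot>\<^sub>m 0\<^sub>m N N + 0\<^sub>m N N = 0\<^sub>m N N" by (rule eq_matI) auto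
  ultimately have zero: "\<phi> (0\<^sub>m N N) = 0" by simp
  define R where "R S = mat N N (\<lambda>(x,y). if (x,y) \<in> S then X $$ (x,y) else 0)" for S
  have partial: "\<phi> (R S) = (\<Sum>p\<in>S. X $$ p * \<phi> (mat_unit N (fst p) (snd p)))"
    if "finite S" "S \<subseteq> {..<N} \<times> {..<N}" for S
    using that
  proof (induction S rule: finite_induct)
    case empty
    have "R {} = 0\<^sub>m N N" by (rule eq_matI) (auto simp: R_def)
    then show ?case using zero by simp
  next
    case (insert p S)
    have "R (insert p S) = X $$ p \<cdot>\<^sub>m mat_unit N (fst p) (snd p) + R S"
      by (rule eq_matI) (use insert.hyps in \<open>auto simp: R_def mat_unit_def\<close>)
    moreover have "\<phi> (X $$ p \<cdot>\<^sub>m mat_unit N (fst p) (snd p) + R S) =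
        X $$ p * \<phi> (mat_unit N (fst p) (snd p)) + \<phi> (R S)"
      by (rule lin) (auto simp: mat_unit_def R_def)
    ultimately show ?case using insert by simp
  qed
  have "R ({..<N} \<times> {..<N}) = X"
    by (rule eq_matI) (use X in \<open>auto simp: R_def\<close>)
  then have "\<phi> X = (\<Sum>p\<in>{..<N} \<times> {..<N}. X $$ p * \<phi> (mat_unit N (fst p) (snd p)))"
    using partial[of "{..<N} \<times> {..<N}"] by simp
  also have "\<dots> = (\<Sum>a<N. \<Sum>b<N. X $$ (a,b) * \<phi> (mat_unit N a b))"
    by (simp add: sum.cartesian_product case_prod_beta)
  finally show ?thesis .
qed

lemma id_tensor_one:
  assumes "X \<in> carrier_mat N N" "F X \<in> carrier_mat M M"
  shows "id_tensor 1 N M F X = F X"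
proof -
  have "block N X 0 0 = X" by (rule eq_matI) (use assms in \<open>auto simp: block_def\<close>)
  then show ?thesis
    by (intro eq_matI) (use assms in \<open>auto simp: id_tensor_def\<close>)
qed

lemma cptpD:
  assumes "cptp N M F" "X \<in> carrier_mat N N"
  shows "F X \<in> carrier_mat M M"
    and "Y \<in> carrier_mat N N \<Longrightarrow> F (c \<cdot>\<^sub>m X + Y) = c \<cdot>\<^sub>m F X + F Y"
    and "mtrace (F X) = mtrace X"
    and "psd X \<Longrightarrow> psd (F X)"
proof -
  show C: "F X \<in> carrier_mat M M" using assms by (simp add: cptp_def)
  show "Y \<in> carrier_mat N N \<Longrightarrow> F (c \<cdot>\<^sub>m X + Y) = c \<cdot>\<^sub>m F X + F Y"
    using assms by (simp add: cptp_def)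
  show "mtrace (F X) = mtrace X" using assms by (simp add: cptp_def)
  assume "psd X"
  then have "psd (id_tensor 1 N M F X)"
    using assms unfolding cptp_def by (metis mult_1)
  then show "psd (F X)" using id_tensor_one[of X N F M] assms(2) C by simp
qed

lemma cptp_density_ops:
  assumes "cptp N M F" "\<rho> \<in> density_ops N"
  shows "F \<rho> \<in> density_ops M"
  using cptpD[OF assms(1) density_opsD(1)[OF assms(2)]] density_opsD[OF assms(2)]
  by (simp add: density_ops_def)

lemma mtrace_mat2: "A \<in> carrier_mat 2 2 \<Longrightarrow> mtrace A = A $$ (0,0) + A $$ (1,1)"
  by (simp add: mtrace_def numeral_2_eq_2)

definition outer_mat :: "nat \<Rightarrow> (nat \<Rightarrow> complex) \<Rightarrow> complex mat" where
  "outer_mat n v = mat n n (\<lambda>(i,j). v i * cnj (v j))"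

lemma qform_eq_tr_prod_outer_mat: "qform n A v = tr_prod n A (outer_mat n v)"
  unfolding qform_def tr_prod_def outer_mat_def by (intro sum.cong refl) (simp add: ac_simps)

lemma psd_outer_mat: "psd (outer_mat n v)"
proof -
  have "qform n (outer_mat n v) u = (\<Sum>i<n. cnj (u i) * v i) * cnj (\<Sum>i<n. cnj (u i) * v i)" for u
  proof -
    have "qform n (outer_mat n v) u = (\<Sum>i<n. \<Sum>j<n. (cnj (u i) * v i) * cnj (cnj (u j) * v j))"
      unfolding qform_def outer_mat_def by (intro sum.cong refl) (simp add: ac_simps)
    then show ?thesis unfolding cnj_sum sum_product .
  qed
  moreover have "0 \<le> g * cnj g" for g
    by (metis cnj_mult_self_nonneg mult.commute)
  ultimately have "\<forall>u. 0 \<le> qform n (outer_mat n v) u"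
    by (simp del: cnj_sum)
  moreover have "outer_mat n v \<in> carrier_mat n n"
    by (simp add: outer_mat_def)
  ultimately show ?thesis
    using psd_iff_qform_nonneg by blast
qed

text \<open>The Heisenberg-picture effect \<open>F\<^sup>\<dagger>(|1\<rangle>\<langle>1|)\<close>.\<close>
definition channel_test :: "nat \<Rightarrow> (complex mat \<Rightarrow> complex mat) \<Rightarrow> complex mat" where
  "channel_test N F = mat N N (\<lambda>(a,b). F (mat_unit N b a) $$ (1,1))"

lemma tr_prod_channel_test:
  assumes F: "cptp N 2 F" and X: "X \<in> carrier_mat N N"
  shows "tr_prod N (channel_test N F) X = F X $$ (1,1)"
proof -
  have lin: "F (c \<cdot>\<^sub>m Y + Z) $$ (1,1) = c * F Y $$ (1,1) + F Z $$ (1,1)"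
    if "Y \<in> carrier_mat N N" "Z \<in> carrier_mat N N" for Y Z c
    using cptpD[OF F that(1)] cptpD(1)[OF F that(2)] that(2) by simp
  have "tr_prod N (channel_test N F) X = (\<Sum>b<N. \<Sum>a<N. X $$ (a,b) * F (mat_unit N a b) $$ (1,1))"
    unfolding tr_prod_def channel_test_def by (intro sum.cong refl) (simp add: mult.commute)
  also have "\<dots> = (\<Sum>a<N. \<Sum>b<N. X $$ (a,b) * F (mat_unit N a b) $$ (1,1))"
    by (rule sum.swap)
  also have "\<dots> = F X $$ (1,1)"
    using linear_functional_expansion[of N "\<lambda>Y. F Y $$ (1,1)", OF lin X] by simp
  finally show ?thesis .
qed

lemma is_test_channel_test:
  assumes F: "cptp N 2 F"
  shows "is_test N (channel_test N F)"
proof -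
  let ?T = "channel_test N F"
  have TC: "?T \<in> carrier_mat N N" by (simp add: channel_test_def)
  have WC: "outer_mat N v \<in> carrier_mat N N" for v by (simp add: outer_mat_def)
  have out: "F (outer_mat N v) \<in> carrier_mat 2 2" "psd (F (outer_mat N v))" for v
    using cptpD[OF F WC] psd_outer_mat by auto
  have "qform N ?T v = F (outer_mat N v) $$ (1,1)" for v
    by (simp add: qform_eq_tr_prod_outer_mat tr_prod_channel_test[OF F WC])
  then have T_psd: "psd ?T"
    using psd_iff_qform_nonneg[OF TC] psd_diag_nonneg[OF out] by simp
  have "qform N (1\<^sub>m N - ?T) v = F (outer_mat N v) $$ (0,0)" for v
  proof -
    have "qform N (1\<^sub>m N - ?T) v = mtrace (F (outer_mat N v)) - F (outer_mat N v) $$ (1,1)"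
      using tr_prod_channel_test[OF F WC] tr_prod_one_left[OF WC] cptpD(3)[OF F WC]
      by (simp add: qform_eq_tr_prod_outer_mat tr_prod_diff_left[OF one_carrier_mat TC])
    then show ?thesis using mtrace_mat2[OF out(1)] by simp
  qed
  moreover have "1\<^sub>m N - ?T \<in> carrier_mat N N" by (rule minus_carrier_mat[OF TC])
  ultimately have "psd (1\<^sub>m N - ?T)"
    using psd_iff_qform_nonneg[of "1\<^sub>m N - ?T" N] psd_diag_nonneg[OF out] by simp
  then show ?thesis using TC T_psd by (simp add: is_test_def)
qed

section \<open>Measure-and-prepare channels\<close>

definition meas_prep :: "nat \<Rightarrow> complex mat \<Rightarrow> complex mat \<Rightarrow> complex mat" where
  "meas_prep N G X = mat 2 2 (\<lambda>(i,j).
      if i = 0 \<and> j = 0 then tr_prod N (1\<^sub>m N - G) X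
      else if i = 1 \<and> j = 1 then tr_prod N G X else 0)"

lemma sum_swap_pair:
  fixes f :: "'a \<Rightarrow> 'b \<Rightarrow> 'c \<Rightarrow> 'd \<Rightarrow> 'e::comm_monoid_add"
  shows "(\<Sum>i\<in>A. \<Sum>j\<in>B. \<Sum>c\<in>C. \<Sum>d\<in>D. f i j c d) = (\<Sum>c\<in>C. \<Sum>d\<in>D. \<Sum>i\<in>A. \<Sum>j\<in>B. f i j c d)"
proof -
  have "(\<Sum>i\<in>A. \<Sum>j\<in>B. \<Sum>c\<in>C. \<Sum>d\<in>D. f i j c d) = (\<Sum>i\<in>A. \<Sum>c\<in>C. \<Sum>j\<in>B. \<Sum>d\<in>D. f i j c d)"
    by (rule sum.cong[OF refl], rule sum.swap)
  also have "\<dots> = (\<Sum>c\<in>C. \<Sum>i\<in>A. \<Sum>j\<in>B. \<Sum>d\<in>D. f i j c d)"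
    by (rule sum.swap)
  also have "\<dots> = (\<Sum>c\<in>C. \<Sum>i\<in>A. \<Sum>d\<in>D. \<Sum>j\<in>B. f i j c d)"
    by (rule sum.cong[OF refl], rule sum.cong[OF refl], rule sum.swap)
  also have "\<dots> = (\<Sum>c\<in>C. \<Sum>d\<in>D. \<Sum>i\<in>A. \<Sum>j\<in>B. f i j c d)"
    by (rule sum.cong[OF refl], rule sum.swap)
  finally show ?thesis .
qed

text \<open>The compression \<open>(a \<otimes> I)\<^sup>\<dagger> X (a \<otimes> I)\<close> of a \<open>k \<times> k\<close> array \<open>X\<close> of
  \<open>N \<times> N\<close> blocks by a vector \<open>a \<in> \<complex>\<^sup>k\<close>.\<close>
definition block_compression :: "nat \<Rightarrow> nat \<Rightarrow> complex mat \<Rightarrow> (nat \<Rightarrow> complex) \<Rightarrow> complex mat" where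
  "block_compression N k X a =
     mat N N (\<lambda>(c,d). \<Sum>i<k. \<Sum>j<k. cnj (a i) * a j * X $$ (i*N + c, j*N + d))"

lemma tr_prod_block_compression:
  "(\<Sum>i<k. \<Sum>j<k. cnj (a i) * a j * tr_prod N G (block N X i j)) = tr_prod N G (block_compression N k X a)"
proof -
  have "(\<Sum>i<k. \<Sum>j<k. cnj (a i) * a j * tr_prod N G (block N X i j)) =
        (\<Sum>i<k. \<Sum>j<k. \<Sum>c<N. \<Sum>d<N. cnj (a i) * a j * (G $$ (c,d) * X $$ (i*N + d, j*N + c)))"
    unfolding tr_prod_def by (simp add: block_def sum_distrib_left)
  also have "\<dots> = (\<Sum>c<N. \<Sum>d<N. \<Sum>i<k. \<Sum>j<k. cnj (a i) * a j * (G $$ (c,d) * X $$ (i*N + d, j*N + c)))"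
    by (rule sum_swap_pair)
  also have "\<dots> = tr_prod N G (block_compression N k X a)"
    unfolding tr_prod_def block_compression_def by (simp add: sum_distrib_left ac_simps)
  finally show ?thesis .
qed

lemma psd_block_compression:
  assumes X: "X \<in> carrier_mat (k*N) (k*N)" "psd X" and N: "N > 0"
  shows "psd (block_compression N k X a)"
proof -
  have nonneg: "0 \<le> qform (k*N) X w" for w
    using X psd_iff_qform_nonneg by blast
  have "qform N (block_compression N k X a) u = qform (k*N) X (\<lambda>p. a (p div N) * u (p mod N))" for u
  proof -
    define w where "w p = a (p div N) * u (p mod N)" for p
    have w: "w (i*N + c) = a i * u c" if "c < N" for i c
      using that N by (simp add: w_def)
    have "qform (k*N) X w =
        (\<Sum>i<k. \<Sum>c<N. \<Sum>j<k. \<Sum>d<N. cnj (w (i*N + c)) * X $$ (i*N + c, j*N + d) * w (j*N + d))"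
      unfolding qform_def by (simp add: sum_lessThan_mult_blocks)
    also have "\<dots> = (\<Sum>i<k. \<Sum>c<N. \<Sum>j<k. \<Sum>d<N. cnj (a i * u c) * X $$ (i*N + c, j*N + d) * (a j * u d))"
      by (intro sum.cong refl) (simp add: w)
    also have "\<dots> = (\<Sum>i<k. \<Sum>j<k. \<Sum>c<N. \<Sum>d<N. cnj (a i * u c) * X $$ (i*N + c, j*N + d) * (a j * u d))"
      by (rule sum.cong[OF refl], rule sum.swap)
    also have "\<dots> = (\<Sum>c<N. \<Sum>d<N. \<Sum>i<k. \<Sum>j<k. cnj (a i * u c) * X $$ (i*N + c, j*N + d) * (a j * u d))"
      by (rule sum_swap_pair)
    also have "\<dots> = qform N (block_compression N k X a) u"
      unfolding qform_def block_compression_def by (simp add: sum_distrib_left sum_distrib_right ac_simps)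
    finally show ?thesis unfolding w_def by simp
  qed
  then show ?thesis
    using psd_iff_qform_nonneg[of "block_compression N k X a" N] nonneg
    by (simp add: block_compression_def)
qed

text \<open>The output of \<open>id \<otimes> meas_prep\<close> splits into the two diagonal outcomes, so its
  quadratic form is a sum of two trace pairings of effects with compressions of \<open>X\<close>.\<close>
lemma psd_id_tensor_meas_prep:
  assumes N: "N > 0" and G: "is_test N G" and X: "X \<in> carrier_mat (k*N) (k*N)" "psd X"
  shows "psd (id_tensor k N 2 (meas_prep N G) X)"
proof -
  define Y where "Y = id_tensor k N 2 (meas_prep N G) X"
  define G' where "G' = 1\<^sub>m N - G"
  have GC: "G \<in> carrier_mat N N" "G' \<in> carrier_mat N N" "psd G" "psd G'"
    using G by (auto simp: is_test_def G'_def)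
  have YC: "Y \<in> carrier_mat (k*2) (k*2)" by (simp add: Y_def id_tensor_def)
  have Y: "Y $$ (i*2 + s, j*2 + t) = (if s = 0 \<and> t = 0 then tr_prod N G' (block N X i j)
      else if s = 1 \<and> t = 1 then tr_prod N G (block N X i j) else 0)"
    if "i < k" "j < k" "s < 2" "t < 2" for i j s t
  proof -
    have "i*2 + s < k*2" "j*2 + t < k*2" using that by linarith+
    then show ?thesis using that by (simp add: Y_def id_tensor_def meas_prep_def G'_def)
  qed
  have sum2: "(\<Sum>s<(2::nat). f s) = f 0 + (f 1 :: complex)" for f
    by (simp add: numeral_2_eq_2)
  have "qform (k*2) Y v = tr_prod N G' (block_compression N k X (\<lambda>i. v (i*2)))
      + tr_prod N G (block_compression N k X (\<lambda>i. v (i*2 + 1)))" for v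
  proof -
    have "qform (k*2) Y v =
        (\<Sum>i<k. \<Sum>s<2. \<Sum>j<k. \<Sum>t<2. cnj (v (i*2 + s)) * Y $$ (i*2 + s, j*2 + t) * v (j*2 + t))"
      unfolding qform_def by (simp add: sum_lessThan_mult_blocks)
    also have "\<dots> = (\<Sum>i<k. \<Sum>s<2. \<Sum>j<k. \<Sum>t<2. cnj (v (i*2 + s)) *
        (if s = 0 \<and> t = 0 then tr_prod N G' (block N X i j)
         else if s = 1 \<and> t = 1 then tr_prod N G (block N X i j) else 0) * v (j*2 + t))"
      by (intro sum.cong refl) (simp add: Y)
    also have "\<dots> = (\<Sum>i<k. \<Sum>j<k. cnj (v (i*2)) * v (j*2) * tr_prod N G' (block N X i j))
       + (\<Sum>i<k. \<Sum>j<k. cnj (v (i*2 + 1)) * v (j*2 + 1) * tr_prod N G (block N X i j))"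
      by (simp add: sum2 sum.distrib ac_simps)
    finally show ?thesis by (simp add: tr_prod_block_compression)
  qed
  moreover have "0 \<le> tr_prod N H (block_compression N k X a)"
    if "H \<in> carrier_mat N N" "psd H" for H a
    using that N X by (intro tr_prod_psd_nonneg psd_block_compression) (auto simp: block_compression_def)
  ultimately have "0 \<le> qform (k*2) Y v" for v
    using GC by (simp add: add_nonneg_nonneg)
  then show ?thesis
    using psd_iff_qform_nonneg[OF YC] by (simp add: Y_def)
qed

lemma cptp_meas_prep:
  assumes N: "N > 0" and G: "is_test N G"
  shows "cptp N 2 (meas_prep N G)"
  unfolding cptp_def
proof (intro conjI ballI allI impI)
  fix X :: "complex mat" assume "X \<in> carrier_mat N N"
  show "meas_prep N G X \<in> carrier_mat 2 2" by (simp add: meas_prep_def)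
next
  fix X Y :: "complex mat" and c :: complex
  assume "X \<in> carrier_mat N N" "Y \<in> carrier_mat N N"
  then show "meas_prep N G (c \<cdot>\<^sub>m X + Y) = c \<cdot>\<^sub>m meas_prep N G X + meas_prep N G Y"
    by (intro eq_matI) (auto simp: meas_prep_def tr_prod_linear_right)
next
  fix X :: "complex mat" assume X: "X \<in> carrier_mat N N"
  have GC: "G \<in> carrier_mat N N" using G by (simp add: is_test_def)
  show "mtrace (meas_prep N G X) = mtrace X"
    using X GC by (simp add: mtrace_mat2 meas_prep_def tr_prod_diff_left tr_prod_one_left)
next
  fix k and X :: "complex mat"
  assume "X \<in> carrier_mat (k*N) (k*N)" "psd X"
  then show "psd (id_tensor k N 2 (meas_prep N G) X)"
    by (rule psd_id_tensor_meas_prep[OF N G])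
qed

section \<open>Trace distance to the charged battery state\<close>

lemma less_2_cases: "i < (2::nat) \<Longrightarrow> i = 0 \<or> i = 1"
  by auto

lemma mat2_mult_entry:
  assumes "A \<in> carrier_mat 2 2" "B \<in> carrier_mat 2 2" "i < 2" "j < 2"
  shows "(A * B) $$ (i,j) = A $$ (i,0) * B $$ (0,j) + A $$ (i,1) * B $$ (1,j)"
  using assms by (simp add: scalar_prod_def numeral_2_eq_2)

lemma mat2_eqI:
  assumes "A \<in> carrier_mat 2 2" "B \<in> carrier_mat 2 2"
    and "A $$ (0,0) = B $$ (0,0)" "A $$ (0,1) = B $$ (0,1)"
    and "A $$ (1,0) = B $$ (1,0)" "A $$ (1,1) = B $$ (1,1)"
  shows "A = B"
proof (rule eq_matI)
  fix i j assume "i < dim_row B" "j < dim_col B"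
  then show "A $$ (i,j) = B $$ (i,j)"
    using assms less_2_cases[of i] less_2_cases[of j] by auto
qed (use assms in auto)

lemma psd_mat2_sqrt_scalar_unique:
  assumes B: "B \<in> carrier_mat 2 2" "psd B" and sq: "B * B = complex_of_real s \<cdot>\<^sub>m 1\<^sub>m 2"
  shows "B = complex_of_real (sqrt s) \<cdot>\<^sub>m 1\<^sub>m 2"
proof -
  define x y z where "x = B $$ (0,0)" and "y = B $$ (1,1)" and "z = B $$ (0,1)"
  have nonneg: "0 \<le> x" "0 \<le> y" using psd_diag_nonneg[OF B] by (simp_all add: x_def y_def)
  have b10: "B $$ (1,0) = cnj z" using psd_entry_cnj[OF B, of 0 1] by (simp add: z_def)
  have entry: "(B * B) $$ (i,j) = (complex_of_real s \<cdot>\<^sub>m 1\<^sub>m 2) $$ (i,j)" for i j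
    using sq by simp
  have e00: "x * x + z * cnj z = complex_of_real s"
    using entry[of 0 0] mat2_mult_entry[OF B(1) B(1), of 0 0] b10 by (simp add: x_def z_def)
  have e01: "z * (x + y) = 0"
    using entry[of 0 1] mat2_mult_entry[OF B(1) B(1), of 0 1] by (simp add: x_def y_def z_def algebra_simps)
  have e11: "cnj z * z + y * y = complex_of_real s"
    using entry[of 1 1] mat2_mult_entry[OF B(1) B(1), of 1 1] b10 by (simp add: y_def z_def)
  have z0: "z = 0"
  proof (rule ccontr)
    assume "z \<noteq> 0"
    then have "x = 0" using e01 nonneg by (simp add: add_nonneg_eq_0_iff)
    then show False
      using qform_nonneg_zero_pivot[of 2 B 0 1] psd_iff_qform_nonneg[OF B(1)] B(2) \<open>z \<noteq> 0\<close>
      by (simp add: x_def z_def)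
  qed
  have sqrt_eq: "w = complex_of_real (sqrt s)" if "0 \<le> w" "w * w = complex_of_real s" for w
  proof -
    have "w = complex_of_real (Re w)" "0 \<le> Re w" using that(1) by (simp_all add: complex_eq_iff complex_nonneg_iff)
    moreover from this have "Re w * Re w = s" using that(2) by (metis Re_complex_of_real of_real_mult)
    ultimately show ?thesis by (metis real_sqrt_abs2 abs_of_nonneg)
  qed
  have "x = complex_of_real (sqrt s)" "y = complex_of_real (sqrt s)"
    using sqrt_eq[OF nonneg(1)] sqrt_eq[OF nonneg(2)] e00 e11 z0 by simp_all
  then show ?thesis
    using B(1) b10 z0 by (intro mat2_eqI) (auto simp: x_def y_def z_def)
qed

lemma psd_sqrt_scalar_mat2:
  assumes "0 \<le> s"
  shows "psd_sqrt (complex_of_real s \<cdot>\<^sub>m 1\<^sub>m 2) = complex_of_real (sqrt s) \<cdot>\<^sub>m 1\<^sub>m 2"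
  unfolding psd_sqrt_def
proof (rule the_equality)
  let ?R = "complex_of_real (sqrt s) \<cdot>\<^sub>m (1\<^sub>m 2 :: complex mat)"
  have "?R * ?R = complex_of_real s \<cdot>\<^sub>m 1\<^sub>m 2"
    using assms mult_carrier_mat[of ?R 2 2 ?R 2]
    by (intro mat2_eqI) (simp_all add: mat2_mult_entry flip: of_real_mult)
  then show "?R \<in> carrier_mat (dim_row (complex_of_real s \<cdot>\<^sub>m (1\<^sub>m 2 :: complex mat)))
      (dim_row (complex_of_real s \<cdot>\<^sub>m (1\<^sub>m 2 :: complex mat))) \<and> psd ?R \<and>
      ?R * ?R = complex_of_real s \<cdot>\<^sub>m 1\<^sub>m 2"
    using assms psd_smult[OF one_carrier_mat psd_one, of "complex_of_real (sqrt s)" 2] by simp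
qed (use psd_mat2_sqrt_scalar_unique in auto)

lemma trace_dist_ket1bra:
  assumes C: "\<sigma> \<in> carrier_mat 2 2" and herm: "\<sigma> $$ (1,0) = cnj (\<sigma> $$ (0,1))"
    and real: "Im (\<sigma> $$ (0,0)) = 0" and tr: "\<sigma> $$ (0,0) + \<sigma> $$ (1,1) = 1"
  shows "trace_dist \<sigma> ket1bra = sqrt ((Re (\<sigma> $$ (0,0)))^2 + (cmod (\<sigma> $$ (0,1)))^2)"
proof -
  define a z where "a = Re (\<sigma> $$ (0,0))" and "z = \<sigma> $$ (0,1)"
  define s where "s = a^2 + (cmod z)^2"
  define Y where "Y = \<sigma> - ket1bra"
  have YC: "Y \<in> carrier_mat 2 2" and DC: "dagger Y \<in> carrier_mat 2 2"
    using C by (auto simp: Y_def ket1bra_def dagger_def)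
  have s00: "\<sigma> $$ (0,0) = complex_of_real a" using real by (simp add: a_def complex_eq_iff)
  have Y: "Y $$ (0,0) = complex_of_real a" "Y $$ (0,1) = z" "Y $$ (1,0) = cnj z" "Y $$ (1,1) = - complex_of_real a"
    using C herm s00 tr by (auto simp: Y_def ket1bra_def z_def algebra_simps)
  have D: "dagger Y $$ (i,j) = cnj (Y $$ (j,i))" if "i < 2" "j < 2" for i j
    using that YC by (simp add: dagger_def)
  have zz: "cnj z * z = complex_of_real ((cmod z)^2)" "z * cnj z = complex_of_real ((cmod z)^2)"
    by (metis complex_norm_square mult.commute)+
  have DY: "dagger Y * Y = complex_of_real s \<cdot>\<^sub>m 1\<^sub>m 2"
    using DC YC
    by (intro mat2_eqI)
      (auto simp del: index_mult_mat simp: mat2_mult_entry D Y Y[unfolded One_nat_def] zz s_def algebra_simps power2_eq_square)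
  have "0 \<le> s" by (simp add: s_def)
  then have "trace_norm Y = Re (mtrace (complex_of_real (sqrt s) \<cdot>\<^sub>m 1\<^sub>m 2))"
    unfolding trace_norm_def DY by (simp only: psd_sqrt_scalar_mat2)
  also have "\<dots> = 2 * sqrt s" by (simp add: mtrace_def numeral_2_eq_2)
  finally show ?thesis by (simp add: trace_dist_def Y_def s_def a_def z_def)
qed

lemma trace_dist_ket1bra_ge:
  assumes "\<sigma> \<in> density_ops 2"
  shows "Re (\<sigma> $$ (0,0)) \<le> trace_dist \<sigma> ket1bra"
proof -
  note \<sigma> = density_opsD[OF assms]
  have "\<sigma> $$ (1,0) = cnj (\<sigma> $$ (0,1))" using psd_entry_cnj[OF \<sigma>(1,2), of 0 1] by simp
  moreover have "Im (\<sigma> $$ (0,0)) = 0" using psd_diag_nonneg[OF \<sigma>(1,2), of 0] by (simp add: complex_nonneg_iff)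
  moreover have "\<sigma> $$ (0,0) + \<sigma> $$ (1,1) = 1" using \<sigma>(3) mtrace_mat2[OF \<sigma>(1)] by simp
  ultimately show ?thesis
    using trace_dist_ket1bra[OF \<sigma>(1)] by (simp add: real_le_rsqrt)
qed

lemma trace_dist_battery_state: "trace_dist (battery_state M) ket1bra = \<bar>1 - 1 / M\<bar>"
  by (subst trace_dist_ket1bra) (simp_all add: battery_state_def)

lemma channel_test_compl_le_trace_dist:
  assumes F: "cptp N 2 F" and \<rho>: "\<rho> \<in> density_ops N"
  shows "Re (mtrace ((1\<^sub>m N - channel_test N F) * \<rho>)) \<le> trace_dist (F \<rho>) ket1bra"
proof -
  let ?T = "channel_test N F"
  have F\<rho>: "F \<rho> \<in> density_ops 2" by (rule cptp_density_ops[OF F \<rho>])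
  have "1\<^sub>m N - ?T \<in> carrier_mat N N" by (rule minus_carrier_mat) (simp add: channel_test_def)
  then have "Re (mtrace ((1\<^sub>m N - ?T) * \<rho>)) = 1 - Re (F \<rho> $$ (1,1))"
    using test_prob_bounds(1)[OF is_test_channel_test[OF F] \<rho>] density_opsD(1)[OF \<rho>]
    by (simp add: mtrace_mult_eq_tr_prod tr_prod_channel_test[OF F])
  also have "\<dots> = Re (F \<rho> $$ (0,0))"
  proof -
    have "F \<rho> $$ (0,0) + F \<rho> $$ (1,1) = 1"
      using density_opsD(3)[OF F\<rho>] mtrace_mat2[OF density_opsD(1)[OF F\<rho>]] by simp
    from arg_cong[OF this, of Re] show ?thesis by simp
  qed
  also have "\<dots> \<le> trace_dist (F \<rho>) ket1bra"
    by (rule trace_dist_ket1bra_ge[OF F\<rho>])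
  finally show ?thesis .
qed

definition gpo_errors :: "nat \<Rightarrow> real \<Rightarrow> complex mat set \<Rightarrow> complex mat set \<Rightarrow> real set" where
  "gpo_errors N M P E = {\<epsilon> \<in> {0..1}. \<exists>F. cptp N 2 F \<and>
      (\<forall>\<rho> \<in> P. trace_dist (F \<rho>) ket1bra \<le> \<epsilon>) \<and> (\<forall>\<tau> \<in> E. F \<tau> \<in> battery_set M)}"

definition test_errors :: "nat \<Rightarrow> real \<Rightarrow> complex mat set \<Rightarrow> complex mat set \<Rightarrow> real set" where
  "test_errors N M P E = {type1_err N T P | T. is_test N T \<and> type2_err T E \<le> 1 / M}"

lemma zeta_GPO_eq_Inf: "zeta_GPO N n r P E = Inf (gpo_errors N (2 powr (real n * r)) P E)"
  by (simp add: zeta_GPO_def gpo_errors_def)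

lemma alpha_err_eq_Inf: "alpha_err N n r P E = Inf (test_errors N (2 powr (real n * r)) P E)"
  by (simp add: alpha_err_def test_errors_def is_test_def type1_err_def type2_err_def
      powr_minus_divide conj_assoc)

lemma zero_test_mem_test_errors:
  assumes "E \<subseteq> density_ops N" "0 < M"
  shows "type1_err N (0\<^sub>m N N) P \<in> test_errors N M P E"
proof -
  have "type2_err (0\<^sub>m N N) E = 0"
    using assms(1) density_opsD(1) by (intro type2_err_zero) blast
  then show ?thesis
    using is_test_zero assms(2) unfolding test_errors_def by (intro CollectI exI[of _ "0\<^sub>m N N"]) simp
qed

lemma test_error_le_gpo_error:
  assumes M: "M > 0" and P: "P \<subseteq> density_ops N" and E: "E \<subseteq> density_ops N"
    and \<epsilon>: "\<epsilon> \<in> gpo_errors N M P E"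
  shows "\<exists>a \<in> test_errors N M P E. a \<le> \<epsilon>"
proof -
  obtain F where \<epsilon>0: "0 \<le> \<epsilon>" and F: "cptp N 2 F"
    and dist: "\<forall>\<rho> \<in> P. trace_dist (F \<rho>) ket1bra \<le> \<epsilon>" and bat: "\<forall>\<tau> \<in> E. F \<tau> \<in> battery_set M"
    using \<epsilon> by (auto simp: gpo_errors_def)
  define T where "T = channel_test N F"
  have T: "is_test N T" using is_test_channel_test[OF F] by (simp add: T_def)
  then have TC: "T \<in> carrier_mat N N" by (simp add: is_test_def)
  have outcome: "mtrace (T * \<rho>) = F \<rho> $$ (1,1)" if "\<rho> \<in> density_ops N" for \<rho>
    using density_opsD(1)[OF that] TC
    by (simp add: mtrace_mult_eq_tr_prod T_def tr_prod_channel_test[OF F])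
  have type2: "type2_err T E \<le> 1 / M"
    unfolding type2_err_def
  proof (rule rsup_le)
    fix x assume "x \<in> (\<lambda>\<tau>. Re (mtrace (T * \<tau>))) ` E"
    then obtain \<tau> M' where "\<tau> \<in> E" "x = Re (mtrace (T * \<tau>))" "M' \<ge> M" "F \<tau> = battery_state M'"
      using bat by (auto simp: battery_set_def)
    then show "x \<le> 1 / M"
      using E outcome M by (auto simp: battery_state_def frac_le)
  qed (use M in simp)
  have type1: "type1_err N T P \<le> \<epsilon>"
    unfolding type1_err_def
  proof (rule rsup_le[OF _ \<epsilon>0])
    fix x assume "x \<in> (\<lambda>\<rho>. Re (mtrace ((1\<^sub>m N - T) * \<rho>))) ` P"
    then show "x \<le> \<epsilon>"
      using channel_test_compl_le_trace_dist[OF F] dist P unfolding T_def by force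
  qed
  have "type1_err N T P \<in> test_errors N M P E"
    unfolding test_errors_def using T type2 by (intro CollectI exI[of _ T]) simp
  then show ?thesis using type1 by blast
qed

lemma meas_prep_eq_battery_state:
  assumes G: "is_test N G" and \<rho>: "\<rho> \<in> density_ops N" and p: "tr_prod N G \<rho> = complex_of_real p"
  shows "meas_prep N G \<rho> = battery_state (1 / p)"
  using test_prob_bounds(1)[OF G \<rho>] p
  by (intro eq_matI) (auto simp: meas_prep_def battery_state_def)

text \<open>Mixing a little of the identity into the test makes every outcome probability positive,
  so that the outputs of the measure-and-prepare channel are genuine battery states.\<close>
definition mixed_test :: "nat \<Rightarrow> real \<Rightarrow> real \<Rightarrow> complex mat \<Rightarrow> complex mat" where
  "mixed_test N M t T =
     complex_of_real t \<cdot>\<^sub>m T + complex_of_real (1 - t) \<cdot>\<^sub>m (complex_of_real (1 / M) \<cdot>\<^sub>m 1\<^sub>m N)"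

lemma is_test_mixed_test:
  assumes "is_test N T" "1 \<le> M" "0 \<le> t" "t \<le> 1"
  shows "is_test N (mixed_test N M t T)"
  unfolding mixed_test_def using assms by (intro is_test_convex is_test_scalar) auto

lemma meas_prep_mixed_test:
  assumes T: "is_test N T" and \<rho>: "\<rho> \<in> density_ops N" and "1 \<le> M" "0 \<le> t" "t \<le> 1"
  shows "meas_prep N (mixed_test N M t T) \<rho> = battery_state (1 / (t * Re (tr_prod N T \<rho>) + (1 - t) / M))"
proof (rule meas_prep_eq_battery_state[OF is_test_mixed_test[OF assms(1,3-5)] \<rho>])
  have "tr_prod N T \<rho> = complex_of_real (Re (tr_prod N T \<rho>))"
    using test_prob_bounds(2)[OF T \<rho>] by (simp add: complex_eq_iff complex_nonneg_iff)
  then show "tr_prod N (mixed_test N M t T) \<rho> = complex_of_real (t * Re (tr_prod N T \<rho>) + (1 - t) / M)"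
    using T density_opsD(1,3)[OF \<rho>]
    by (simp add: mixed_test_def is_test_def tr_prod_linear_left tr_prod_smult_left tr_prod_one_left)
qed

lemma mixed_prob_bounds:
  fixes q t M :: real
  assumes q: "0 \<le> q" "q \<le> 1" and t: "0 \<le> t" "t < 1" and M: "1 \<le> M"
  shows "0 < t * q + (1 - t) / M" "t * q + (1 - t) / M \<le> 1"
    and "q \<le> 1 / M \<Longrightarrow> t * q + (1 - t) / M \<le> 1 / M"
    and "1 - (t * q + (1 - t) / M) \<le> (1 - q) + (1 - t)"
proof -
  have tq: "0 \<le> t * q" "t * q \<le> t" using q t by (simp_all add: mult_left_le)
  have tM: "0 < (1 - t) / M" "(1 - t) / M \<le> 1 - t" using t M by (simp_all add: divide_le_eq mult_le_cancel_left1)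
  show "0 < t * q + (1 - t) / M" "t * q + (1 - t) / M \<le> 1" using tq tM by simp_all
  show "q \<le> 1 / M \<Longrightarrow> t * q + (1 - t) / M \<le> 1 / M"
  proof -
    assume "q \<le> 1 / M"
    then have "t * q \<le> t * (1 / M)" using t by (intro mult_left_mono) auto
    moreover have "t * (1 / M) + (1 - t) / M = 1 / M" by (simp add: diff_divide_distrib)
    ultimately show ?thesis by simp
  qed
  have "q * (1 - t) \<le> 1 - t" using q t by (simp add: mult_left_le_one_le)
  then show "1 - (t * q + (1 - t) / M) \<le> (1 - q) + (1 - t)" using tM by (simp add: algebra_simps)
qed

lemma gpo_error_approx_test_error:
  assumes N: "N > 0" and M: "M \<ge> 1" and P: "P \<subseteq> density_ops N" and E: "E \<subseteq> density_ops N"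
    and T: "is_test N T" and TE: "type2_err T E \<le> 1 / M" and \<delta>: "\<delta> > 0"
  shows "\<exists>\<epsilon> \<in> gpo_errors N M P E. \<epsilon> \<le> type1_err N T P + \<delta>"
proof -
  define t where "t = 1 - min 1 \<delta>"
  have t: "0 \<le> t" "t < 1" "1 - t \<le> \<delta>" using \<delta> by (auto simp: t_def)
  define G where "G = mixed_test N M t T"
  define Q where "Q \<rho> = t * Re (tr_prod N T \<rho>) + (1 - t) / M" for \<rho>
  have out: "meas_prep N G \<rho> = battery_state (1 / Q \<rho>)" if "\<rho> \<in> density_ops N" for \<rho>
    unfolding G_def Q_def using meas_prep_mixed_test[OF T that M] t by simp
  note bounds = mixed_prob_bounds[OF _ _ t(1,2) M, of "Re (tr_prod N T \<rho>)" for \<rho>, folded Q_def]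
  have q: "0 \<le> Re (tr_prod N T \<rho>)" "Re (tr_prod N T \<rho>) \<le> 1" if "\<rho> \<in> density_ops N" for \<rho>
    using test_prob_bounds(2,3)[OF T that] by (simp_all add: less_eq_complex_def)
  have "meas_prep N G \<tau> \<in> battery_set M" if "\<tau> \<in> E" for \<tau>
  proof -
    have \<tau>: "\<tau> \<in> density_ops N" using that E by blast
    have "Q \<tau> \<le> 1 / M"
      using bounds(3) q[OF \<tau>] type2_err_ge[OF T E that] TE by simp
    then have "M \<le> 1 / Q \<tau>"
      using bounds(1) q[OF \<tau>] M by (simp add: field_simps)
    then show ?thesis
      using out[OF \<tau>] by (auto simp: battery_set_def)
  qed
  moreover have "trace_dist (meas_prep N G \<rho>) ket1bra \<le> min 1 (type1_err N T P + \<delta>)" if "\<rho> \<in> P" for \<rho>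
  proof -
    have \<rho>: "\<rho> \<in> density_ops N" using that P by blast
    have "trace_dist (meas_prep N G \<rho>) ket1bra = 1 - Q \<rho>"
      using out[OF \<rho>] bounds(2) q[OF \<rho>] by (simp add: trace_dist_battery_state)
    then show ?thesis
      using bounds(1,4)[OF q[OF \<rho>]] type1_err_ge[OF T P that] t by simp
  qed
  moreover have "min 1 (type1_err N T P + \<delta>) \<in> {0..1}"
    using type1_err_nonneg[OF T P] \<delta> by simp
  moreover have "cptp N 2 (meas_prep N G)"
    using cptp_meas_prep[OF N is_test_mixed_test[OF T M]] t by (simp add: G_def)
  ultimately have "min 1 (type1_err N T P + \<delta>) \<in> gpo_errors N M P E"
    unfolding gpo_errors_def by blast
  then show ?thesis by (rule bexI[rotated]) simp
qed

lemma Inf_eq_if_mutually_approximating: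
  fixes A B :: "real set"
  assumes ne: "A \<noteq> {}" "B \<noteq> {}" and bdd: "bdd_below A" "bdd_below B"
    and AB: "\<And>b \<delta>. b \<in> B \<Longrightarrow> 0 < \<delta> \<Longrightarrow> \<exists>a \<in> A. a \<le> b + \<delta>"
    and BA: "\<And>a. a \<in> A \<Longrightarrow> \<exists>b \<in> B. b \<le> a"
  shows "Inf A = Inf B"
proof (rule antisym)
  show "Inf A \<le> Inf B"
  proof (rule cInf_greatest[OF ne(2)])
    fix b assume b: "b \<in> B"
    show "Inf A \<le> b"
    proof (rule field_le_epsilon)
      fix \<delta> :: real assume "0 < \<delta>"
      then obtain a where "a \<in> A" "a \<le> b + \<delta>" using AB[OF b] by blast
      then show "Inf A \<le> b + \<delta>" using cInf_lower[OF _ bdd(1)] by force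
    qed
  qed
  show "Inf B \<le> Inf A"
  proof (rule cInf_greatest[OF ne(1)])
    fix a assume "a \<in> A"
    then obtain b where "b \<in> B" "b \<le> a" using BA by blast
    then show "Inf B \<le> a" using cInf_lower[OF _ bdd(2)] by force
  qed
qed

theorem propositionS5:
  fixes d n :: nat and r :: real and P E :: "complex mat set"
  assumes "d \<ge> 1"
    and "P \<subseteq> density_ops (d ^ n)"
    and "E \<subseteq> density_ops (d ^ n)"
    and "r > 0"
  shows "zeta_GPO (d ^ n) n r P E = alpha_err (d ^ n) n r P E"
proof -
  define N M where "N = d ^ n" and "M = 2 powr (real n * r)"
  have N: "N > 0" using assms(1) by (simp add: N_def)
  have M: "M \<ge> 1" using assms(4) by (simp add: M_def ge_one_powr_ge_zero)
  have P: "P \<subseteq> density_ops N" and E: "E \<subseteq> density_ops N" using assms(2,3) by (simp_all add: N_def)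
  have zero: "type1_err N (0\<^sub>m N N) P \<in> test_errors N M P E"
    using zero_test_mem_test_errors[OF E] M by simp
  have "Inf (gpo_errors N M P E) = Inf (test_errors N M P E)"
  proof (rule Inf_eq_if_mutually_approximating)
    show "test_errors N M P E \<noteq> {}" using zero by blast
    show "bdd_below (test_errors N M P E)"
      using type1_err_nonneg P by (intro bdd_belowI[of _ 0]) (auto simp: test_errors_def)
    show "bdd_below (gpo_errors N M P E)"
      by (intro bdd_belowI[of _ 0]) (simp add: gpo_errors_def)
    show approx: "\<exists>a \<in> gpo_errors N M P E. a \<le> b + \<delta>" if "b \<in> test_errors N M P E" "0 < \<delta>" for b \<delta>
      using that gpo_error_approx_test_error[OF N M P E] unfolding test_errors_def by blast
    show "gpo_errors N M P E \<noteq> {}" using approx[OF zero, of 1] by auto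
    show "\<exists>b \<in> test_errors N M P E. b \<le> a" if "a \<in> gpo_errors N M P E" for a
      using test_error_le_gpo_error[OF _ P E that] M by simp
  qed
  then show ?thesis
    by (simp add: zeta_GPO_eq_Inf alpha_err_eq_Inf N_def M_def)
qed

end
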